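(* Let $f$ satisfy Assumption A, $g$ satisfy Assumption B, $L>L_f$, and let $(u_k)$ be a sequence of proximal gradient iterates with parameter $L$. Then $u_{k+1}(x)-u_k(x)\to0$ for almost all $x\in\Omega$.
   Context: $\Omega\subset\mathbb{R}^n$ Lebesgue measurable with finite measure. Assumption A: $f:L^2(\Omega)\to\mathbb{R}$ bounded below, weakly lower semicontinuous, Fréchet differentiable, $\nabla f$ Lipschitz with constant $L_f$. Assumption B on $g:\mathbb{R}\to\mathbb{R}\cup\{+\infty\}$: (B1) lsc, symmetric, $g(0)=0$; (B2) $g(u)<\infty$ for some $u\ne0$; (B3) one of (B3a) $g$ twice differentiable on some $(0,\epsilon)$, $\limsup_{u\searrow0}g''(u)\in(-\infty,0)$; (B3b) same differentiability, $\lim_{u\searrow0}g''(u)=-\infty$; (B3c) $\liminf_{u\searrow0}g(u)>0$; (B4) $g\ge0$. Proximal gradient iterates with parameter $L>0$: $(u_k)_{k\ge0}\subset L^2(\Omega)$, arbitrary $u_0$, each $u_{k+1}$ a global minimizer over $L^2(\Omega)$ of $f(u_k)+\int_\Omega\nabla f(u_k)(u-u_k)\,dx+\frac L2\|u-u_k\|^2_{L^2(\Omega)}+\int_\Omega g(u(x))\,dx$. *)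

theory Defs
  imports "HOL-Analysis.Analysis"
begin

text \<open>Elements of L2(Omega) are represented by (Lebesgue measurable) real functions
  on the ambient Euclidean space that are square integrable over Omega; only the
  values on Omega matter and functions equal a.e. on Omega represent the same class.\<close>

definition L2 :: "'a::euclidean_space set \<Rightarrow> ('a \<Rightarrow> real) set" where
  "L2 \<Omega> = {u. u \<in> borel_measurable (lebesgue_on \<Omega>)
              \<and> integrable (lebesgue_on \<Omega>) (\<lambda>x. (u x)\<^sup>2)}"

definition L2_inner :: "'a::euclidean_space set \<Rightarrow> ('a \<Rightarrow> real) \<Rightarrow> ('a \<Rightarrow> real) \<Rightarrow> real" where
  "L2_inner \<Omega> u v = integral\<^sup>L (lebesgue_on \<Omega>) (\<lambda>x. u x * v x)"

definition L2_norm :: "'a::euclidean_space set \<Rightarrow> ('a \<Rightarrow> real) \<Rightarrow> real" where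
  "L2_norm \<Omega> u = sqrt (integral\<^sup>L (lebesgue_on \<Omega>) (\<lambda>x. (u x)\<^sup>2))"

definition assumptionA ::
  "'a::euclidean_space set \<Rightarrow> (('a \<Rightarrow> real) \<Rightarrow> real) \<Rightarrow> (('a \<Rightarrow> real) \<Rightarrow> ('a \<Rightarrow> real)) \<Rightarrow> real \<Rightarrow> bool" where
  "assumptionA \<Omega> f Df Lf \<longleftrightarrow>
     (\<forall>u\<in>L2 \<Omega>. \<forall>v\<in>L2 \<Omega>. (AE x in lebesgue_on \<Omega>. u x = v x) \<longrightarrow> f u = f v)
   \<and> (\<exists>c. \<forall>u\<in>L2 \<Omega>. c \<le> f u)
   \<and> (\<forall>us u. (\<forall>k. us k \<in> L2 \<Omega>) \<longrightarrow> u \<in> L2 \<Omega> \<longrightarrow>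
        (\<forall>w\<in>L2 \<Omega>. (\<lambda>k. L2_inner \<Omega> (us k) w) \<longlonglongrightarrow> L2_inner \<Omega> u w) \<longrightarrow>
        ereal (f u) \<le> liminf (\<lambda>k. ereal (f (us k))))
   \<and> (\<forall>u\<in>L2 \<Omega>. Df u \<in> L2 \<Omega>)
   \<and> (\<forall>u\<in>L2 \<Omega>. \<forall>e>0. \<exists>d>0. \<forall>v\<in>L2 \<Omega>. L2_norm \<Omega> (\<lambda>x. v x - u x) < d \<longrightarrow>
        \<bar>f v - f u - L2_inner \<Omega> (Df u) (\<lambda>x. v x - u x)\<bar> \<le> e * L2_norm \<Omega> (\<lambda>x. v x - u x))
   \<and> 0 \<le> Lf
   \<and> (\<forall>u\<in>L2 \<Omega>. \<forall>v\<in>L2 \<Omega>.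
        L2_norm \<Omega> (\<lambda>x. Df u x - Df v x) \<le> Lf * L2_norm \<Omega> (\<lambda>x. u x - v x))"

definition lsc_fun :: "(real \<Rightarrow> ereal) \<Rightarrow> bool" where
  "lsc_fun g \<longleftrightarrow> (\<forall>x. g x \<le> Liminf (at x) g)"

definition twice_diff_near0 :: "(real \<Rightarrow> ereal) \<Rightarrow> real \<Rightarrow> (real \<Rightarrow> real) \<Rightarrow> bool" where
  "twice_diff_near0 g eps h2 \<longleftrightarrow> (\<exists>h h1. \<forall>u\<in>{0<..<eps}.
      g u = ereal (h u) \<and> (h has_real_derivative h1 u) (at u)
      \<and> (h1 has_real_derivative h2 u) (at u))"

definition assumptionB :: "(real \<Rightarrow> ereal) \<Rightarrow> bool" where
  "assumptionB g \<longleftrightarrow>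
     lsc_fun g \<and> (\<forall>u. g (- u) = g u) \<and> g 0 = 0
   \<and> (\<exists>u. u \<noteq> 0 \<and> g u < \<infinity>)
   \<and> ( (\<exists>eps>0. \<exists>h2. twice_diff_near0 g eps h2 \<and>
           - \<infinity> < Limsup (at_right 0) (\<lambda>u. ereal (h2 u)) \<and> Limsup (at_right 0) (\<lambda>u. ereal (h2 u)) < 0)
      \<or> (\<exists>eps>0. \<exists>h2. twice_diff_near0 g eps h2 \<and> filterlim h2 at_bot (at_right 0))
      \<or> Liminf (at_right 0) g > 0)
   \<and> (\<forall>u. 0 \<le> g u)"

text \<open>The integral of g(u(x)) over Omega (g is nonnegative, so this is a
  nonnegative Lebesgue integral, possibly infinite).\<close>
definition G_int :: "'a::euclidean_space set \<Rightarrow> (real \<Rightarrow> ereal) \<Rightarrow> ('a \<Rightarrow> real) \<Rightarrow> ereal" where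
  "G_int \<Omega> g u = enn2ereal (\<integral>\<^sup>+ x. e2ennreal (g (u x)) \<partial>(lebesgue_on \<Omega>))"

definition prox_objective ::
  "'a::euclidean_space set \<Rightarrow> (('a \<Rightarrow> real) \<Rightarrow> real) \<Rightarrow> (('a \<Rightarrow> real) \<Rightarrow> ('a \<Rightarrow> real))
   \<Rightarrow> (real \<Rightarrow> ereal) \<Rightarrow> real \<Rightarrow> ('a \<Rightarrow> real) \<Rightarrow> ('a \<Rightarrow> real) \<Rightarrow> ereal" where
  "prox_objective \<Omega> f Df g L uk u =
     ereal (f uk + L2_inner \<Omega> (Df uk) (\<lambda>x. u x - uk x)
            + L / 2 * (L2_norm \<Omega> (\<lambda>x. u x - uk x))\<^sup>2) + G_int \<Omega> g u"

definition prox_grad_iterates ::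
  "'a::euclidean_space set \<Rightarrow> (('a \<Rightarrow> real) \<Rightarrow> real) \<Rightarrow> (('a \<Rightarrow> real) \<Rightarrow> ('a \<Rightarrow> real))
   \<Rightarrow> (real \<Rightarrow> ereal) \<Rightarrow> real \<Rightarrow> (nat \<Rightarrow> 'a \<Rightarrow> real) \<Rightarrow> bool" where
  "prox_grad_iterates \<Omega> f Df g L us \<longleftrightarrow>
     us 0 \<in> L2 \<Omega> \<and>
     (\<forall>k. us (Suc k) \<in> L2 \<Omega> \<and>
        (\<forall>v\<in>L2 \<Omega>. prox_objective \<Omega> f Df g L (us k) (us (Suc k))
                    \<le> prox_objective \<Omega> f Df g L (us k) v))"

end

theory Submission
  imports Defs
begin

(* Comparing the minimiser u(k+1) with the competitor u(k) and bounding f(u(k+1)) by the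
   descent lemma (a consequence of the Lipschitz gradient) gives the sufficient decrease
   F(u(k+1)) + (L - Lf)/2 * |u(k+1) - u(k)|^2 <= F(u(k)) for F = f + integral of g(u).
   Since F is bounded below, the squared steps are summable in L2; by monotone convergence
   the pointwise series of |u(k+1)(x) - u(k)(x)|^2 is then finite almost everywhere, so its
   terms tend to zero. *)

lemma L2_measurable: "u \<in> L2 \<Omega> \<Longrightarrow> u \<in> borel_measurable (lebesgue_on \<Omega>)"
  by (simp add: L2_def)

lemma L2_integrable_power2:
  "u \<in> L2 \<Omega> \<Longrightarrow> integrable (lebesgue_on \<Omega>) (\<lambda>x. (u x)\<^sup>2)"
  by (simp add: L2_def)

lemma L2_zero: "(\<lambda>x. 0) \<in> L2 \<Omega>"
  by (simp add: L2_def)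

lemma L2_lincomb:
  assumes u: "u \<in> L2 \<Omega>" and v: "v \<in> L2 \<Omega>"
  shows "(\<lambda>x. a * u x + b * v x) \<in> L2 \<Omega>"
proof -
  have [measurable]: "u \<in> borel_measurable (lebesgue_on \<Omega>)" "v \<in> borel_measurable (lebesgue_on \<Omega>)"
    using u v by (auto intro: L2_measurable)
  have "integrable (lebesgue_on \<Omega>) (\<lambda>x. (a * u x + b * v x)\<^sup>2)"
  proof (rule Bochner_Integration.integrable_bound)
    show "integrable (lebesgue_on \<Omega>) (\<lambda>x. 2 * a\<^sup>2 * (u x)\<^sup>2 + 2 * b\<^sup>2 * (v x)\<^sup>2)"
      using u v by (simp add: L2_integrable_power2)
    have "(a * u x + b * v x)\<^sup>2 \<le> 2 * a\<^sup>2 * (u x)\<^sup>2 + 2 * b\<^sup>2 * (v x)\<^sup>2" for x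
      using sum_squares_ge_zero[of "a * u x - b * v x" 0]
      by (simp add: power2_eq_square algebra_simps)
    then show "AE x in lebesgue_on \<Omega>.
        norm ((a * u x + b * v x)\<^sup>2) \<le> norm (2 * a\<^sup>2 * (u x)\<^sup>2 + 2 * b\<^sup>2 * (v x)\<^sup>2)"
      by simp
  qed measurable
  then show ?thesis by (simp add: L2_def)
qed

lemma L2_diff: "u \<in> L2 \<Omega> \<Longrightarrow> v \<in> L2 \<Omega> \<Longrightarrow> (\<lambda>x. u x - v x) \<in> L2 \<Omega>"
  using L2_lincomb[of u \<Omega> v 1 "-1"] by simp

lemma integrable_L2_mult:
  assumes u: "u \<in> L2 \<Omega>" and v: "v \<in> L2 \<Omega>"
  shows "integrable (lebesgue_on \<Omega>) (\<lambda>x. u x * v x)"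
proof (rule Bochner_Integration.integrable_bound)
  show "integrable (lebesgue_on \<Omega>) (\<lambda>x. (u x)\<^sup>2 + (v x)\<^sup>2)"
    using u v by (simp add: L2_integrable_power2)
  show "(\<lambda>x. u x * v x) \<in> borel_measurable (lebesgue_on \<Omega>)"
    by (rule borel_measurable_times[OF L2_measurable[OF u] L2_measurable[OF v]])
  have "\<bar>u x * v x\<bar> \<le> (u x)\<^sup>2 + (v x)\<^sup>2" for x
  proof -
    have "2 * (\<bar>u x\<bar> * \<bar>v x\<bar>) \<le> (u x)\<^sup>2 + (v x)\<^sup>2"
      using sum_squares_ge_zero[of "\<bar>u x\<bar> - \<bar>v x\<bar>" 0] by (simp add: power2_eq_square algebra_simps)
    moreover have "0 \<le> \<bar>u x\<bar> * \<bar>v x\<bar>" by simp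
    ultimately show ?thesis unfolding abs_mult by linarith
  qed
  then show "AE x in lebesgue_on \<Omega>. norm (u x * v x) \<le> norm ((u x)\<^sup>2 + (v x)\<^sup>2)"
    by simp
qed

lemma L2_norm_nonneg: "0 \<le> L2_norm \<Omega> u"
  by (simp add: L2_norm_def)

lemma L2_norm_power2: "(L2_norm \<Omega> u)\<^sup>2 = (\<integral>x. (u x)\<^sup>2 \<partial>lebesgue_on \<Omega>)"
  by (simp add: L2_norm_def)

lemma L2_norm_mult: "L2_norm \<Omega> (\<lambda>x. t * u x) = \<bar>t\<bar> * L2_norm \<Omega> u"
  by (simp add: L2_norm_def power_mult_distrib real_sqrt_mult)

lemma L2_inner_mult_right: "L2_inner \<Omega> w (\<lambda>x. t * u x) = t * L2_inner \<Omega> w u"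
  by (simp add: L2_inner_def mult.left_commute)

lemma L2_inner_diff_left:
  assumes "v \<in> L2 \<Omega>" "w \<in> L2 \<Omega>" "u \<in> L2 \<Omega>"
  shows "L2_inner \<Omega> (\<lambda>x. v x - w x) u = L2_inner \<Omega> v u - L2_inner \<Omega> w u"
  using integrable_L2_mult[OF assms(1,3)] integrable_L2_mult[OF assms(2,3)]
  by (simp add: L2_inner_def left_diff_distrib)

lemma L2_inner_le_norm_mult:
  assumes u: "u \<in> L2 \<Omega>" and v: "v \<in> L2 \<Omega>"
  shows "L2_inner \<Omega> u v \<le> L2_norm \<Omega> u * L2_norm \<Omega> v"
proof -
  let ?M = "lebesgue_on \<Omega>"
  have [measurable]: "u \<in> borel_measurable ?M" "v \<in> borel_measurable ?M"
    using u v by (auto intro: L2_measurable)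
  define P where "P = (\<integral>x. \<bar>u x\<bar> * \<bar>v x\<bar> \<partial>?M)"
  have P_nonneg: "0 \<le> P"
    unfolding P_def by (simp add: integral_nonneg_AE)
  have int_uv: "integrable ?M (\<lambda>x. \<bar>u x\<bar> * \<bar>v x\<bar>)"
    using integrable_abs[OF integrable_L2_mult[OF u v]] by (simp add: abs_mult)
  have nn_uv: "(\<integral>\<^sup>+x. ennreal (\<bar>u x\<bar> * \<bar>v x\<bar>) \<partial>?M) = ennreal P"
    unfolding P_def using int_uv by (simp add: nn_integral_eq_integral)
  have nn_sq: "(\<integral>\<^sup>+x. ennreal ((w x)\<^sup>2) \<partial>?M) = ennreal ((L2_norm \<Omega> w)\<^sup>2)"
    if "w \<in> L2 \<Omega>" for w
    using L2_integrable_power2[OF that] by (simp add: L2_norm_power2 nn_integral_eq_integral)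
  have "(\<integral>\<^sup>+x. ennreal (\<bar>u x\<bar> * \<bar>v x\<bar>) \<partial>?M)\<^sup>2
      \<le> (\<integral>\<^sup>+x. ennreal ((u x)\<^sup>2) \<partial>?M) * (\<integral>\<^sup>+x. ennreal ((v x)\<^sup>2) \<partial>?M)"
    using Cauchy_Schwarz_nn_integral[of "\<lambda>x. ennreal \<bar>u x\<bar>" ?M "\<lambda>x. ennreal \<bar>v x\<bar>"] u v
    by (simp add: ennreal_power ennreal_mult[symmetric])
  then have "P\<^sup>2 \<le> (L2_norm \<Omega> u)\<^sup>2 * (L2_norm \<Omega> v)\<^sup>2"
    unfolding nn_uv nn_sq[OF u] nn_sq[OF v]
    using P_nonneg by (simp add: ennreal_power ennreal_mult[symmetric] ennreal_le_iff)
  then have "P\<^sup>2 \<le> (L2_norm \<Omega> u * L2_norm \<Omega> v)\<^sup>2"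
    by (simp add: power_mult_distrib)
  then have "P \<le> L2_norm \<Omega> u * L2_norm \<Omega> v"
    by (rule power2_le_imp_le) (simp add: L2_norm_nonneg)
  moreover have "L2_inner \<Omega> u v \<le> P"
    unfolding L2_inner_def P_def
    using integrable_L2_mult[OF u v] int_uv by (intro integral_mono) (auto simp: abs_mult[symmetric])
  ultimately show ?thesis by linarith
qed

lemma assumptionA_bounded_below:
  assumes "assumptionA \<Omega> f Df Lf"
  obtains c where "\<And>u. u \<in> L2 \<Omega> \<Longrightarrow> c \<le> f u"
  using assms[unfolded assumptionA_def, THEN conjunct2, THEN conjunct1] by blast

lemma assumptionA_gradient_L2:
  assumes "assumptionA \<Omega> f Df Lf" and "u \<in> L2 \<Omega>"
  shows "Df u \<in> L2 \<Omega>"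
  using assms(1)[unfolded assumptionA_def, THEN conjunct2, THEN conjunct2, THEN conjunct2,
      THEN conjunct1] assms(2) by blast

lemma assumptionA_frechet:
  assumes "assumptionA \<Omega> f Df Lf" and "u \<in> L2 \<Omega>" and "e > 0"
  shows "\<exists>\<delta>>0. \<forall>v\<in>L2 \<Omega>. L2_norm \<Omega> (\<lambda>x. v x - u x) < \<delta> \<longrightarrow>
           \<bar>f v - f u - L2_inner \<Omega> (Df u) (\<lambda>x. v x - u x)\<bar> \<le> e * L2_norm \<Omega> (\<lambda>x. v x - u x)"
  using assms(1)[unfolded assumptionA_def, THEN conjunct2, THEN conjunct2, THEN conjunct2,
      THEN conjunct2, THEN conjunct1] assms(2,3) by blast

lemma assumptionA_gradient_Lipschitz:
  assumes "assumptionA \<Omega> f Df Lf" and "u \<in> L2 \<Omega>" and "v \<in> L2 \<Omega>"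
  shows "L2_norm \<Omega> (\<lambda>x. Df u x - Df v x) \<le> Lf * L2_norm \<Omega> (\<lambda>x. u x - v x)"
  using assms(1)[unfolded assumptionA_def, THEN conjunct2, THEN conjunct2, THEN conjunct2,
      THEN conjunct2, THEN conjunct2, THEN conjunct2] assms(2,3) by blast

lemma assumptionA_line_derivative:
  assumes A: "assumptionA \<Omega> f Df Lf" and u: "u \<in> L2 \<Omega>" and d: "d \<in> L2 \<Omega>"
  shows "((\<lambda>t. f (\<lambda>x. u x + t * d x)) has_real_derivative
           L2_inner \<Omega> (Df (\<lambda>x. u x + t0 * d x)) d) (at t0)"
proof -
  define w where "w t = (\<lambda>x. u x + t * d x)" for t
  define D where "D = L2_inner \<Omega> (Df (w t0)) d"
  define N where "N = L2_norm \<Omega> d"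
  have w_L2: "w t \<in> L2 \<Omega>" for t
    unfolding w_def using L2_lincomb[OF u d, of 1 t] by simp
  have w_diff: "(\<lambda>x. w y x - w t0 x) = (\<lambda>x. (y - t0) * d x)" for y
    by (simp add: w_def algebra_simps)
  have N_nonneg: "0 \<le> N"
    unfolding N_def by (rule L2_norm_nonneg)
  have "\<exists>r>0. \<forall>y. \<bar>y - t0\<bar> < r \<longrightarrow> \<bar>f (w y) - f (w t0) - (y - t0) * D\<bar> \<le> e * \<bar>y - t0\<bar>"
    if e: "e > 0" for e
  proof -
    have "e / (N + 1) > 0"
      using e N_nonneg by simp
    then obtain \<delta> where "\<delta> > 0" and \<delta>: "\<forall>z\<in>L2 \<Omega>. L2_norm \<Omega> (\<lambda>x. z x - w t0 x) < \<delta> \<longrightarrow>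
        \<bar>f z - f (w t0) - L2_inner \<Omega> (Df (w t0)) (\<lambda>x. z x - w t0 x)\<bar>
          \<le> e / (N + 1) * L2_norm \<Omega> (\<lambda>x. z x - w t0 x)"
      using assumptionA_frechet[OF A w_L2] by blast
    show ?thesis
    proof (intro exI[of _ "\<delta> / (N + 1)"] conjI allI impI)
      show "0 < \<delta> / (N + 1)" using \<open>\<delta> > 0\<close> N_nonneg by simp
      fix y assume y: "\<bar>y - t0\<bar> < \<delta> / (N + 1)"
      have "\<bar>y - t0\<bar> * N \<le> \<bar>y - t0\<bar> * (N + 1)" by (simp add: mult_left_mono)
      also have "\<dots> < \<delta>" using y N_nonneg by (simp add: field_simps)
      finally have "L2_norm \<Omega> (\<lambda>x. w y x - w t0 x) < \<delta>"
        by (simp add: w_diff L2_norm_mult N_def)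
      then have "\<bar>f (w y) - f (w t0) - (y - t0) * D\<bar> \<le> e / (N + 1) * (\<bar>y - t0\<bar> * N)"
        using \<delta>[rule_format, OF w_L2[of y]]
        by (simp add: w_diff L2_norm_mult L2_inner_mult_right D_def N_def)
      also have "\<dots> = e * \<bar>y - t0\<bar> * (N / (N + 1))"
        by simp
      also have "\<dots> \<le> e * \<bar>y - t0\<bar>"
        using e N_nonneg by (intro mult_left_le) auto
      finally show "\<bar>f (w y) - f (w t0) - (y - t0) * D\<bar> \<le> e * \<bar>y - t0\<bar>" .
    qed
  qed
  then have "((\<lambda>t. f (w t)) has_derivative (\<lambda>h. h * D)) (at t0)"
    unfolding has_derivative_at_alt by (simp add: bounded_linear_mult_left)
  then show ?thesis
    unfolding w_def D_def by (rule has_derivative_imp_has_field_derivative) simp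
qed

lemma assumptionA_descent:
  assumes A: "assumptionA \<Omega> f Df Lf" and u: "u \<in> L2 \<Omega>" and v: "v \<in> L2 \<Omega>"
  shows "f v \<le> f u + L2_inner \<Omega> (Df u) (\<lambda>x. v x - u x) + Lf / 2 * (L2_norm \<Omega> (\<lambda>x. v x - u x))\<^sup>2"
proof -
  define d where "d = (\<lambda>x. v x - u x)"
  define w where "w t = (\<lambda>x. u x + t * d x)" for t
  define I where "I = L2_inner \<Omega> (Df u) d"
  define N where "N = L2_norm \<Omega> d"
  define \<phi> where "\<phi> t = f (w t) - t * I - Lf / 2 * t\<^sup>2 * N\<^sup>2" for t
  have d_L2: "d \<in> L2 \<Omega>"
    unfolding d_def using L2_diff[OF v u] .
  have w_L2: "w t \<in> L2 \<Omega>" for t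
    unfolding w_def using L2_lincomb[OF u d_L2, of 1 t] by simp
  note Df_L2 = assumptionA_gradient_L2[OF A]
  have "\<phi> 1 \<le> \<phi> 0"
  proof (rule DERIV_nonpos_imp_nonincreasing[of 0 1])
    fix t :: real assume t: "0 \<le> t" "t \<le> 1"
    have "(\<phi> has_real_derivative L2_inner \<Omega> (Df (w t)) d - I - Lf * t * N\<^sup>2) (at t)"
      unfolding \<phi>_def w_def
      by (auto intro!: derivative_eq_intros assumptionA_line_derivative[OF A u d_L2])
    moreover have "L2_inner \<Omega> (Df (w t)) d - I \<le> Lf * t * N\<^sup>2"
    proof -
      have "L2_inner \<Omega> (Df (w t)) d - I = L2_inner \<Omega> (\<lambda>x. Df (w t) x - Df u x) d"
        unfolding I_def using L2_inner_diff_left[OF Df_L2[OF w_L2] Df_L2[OF u] d_L2] by simp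
      also have "\<dots> \<le> L2_norm \<Omega> (\<lambda>x. Df (w t) x - Df u x) * N"
        unfolding N_def by (rule L2_inner_le_norm_mult[OF L2_diff[OF Df_L2[OF w_L2] Df_L2[OF u]] d_L2])
      also have "\<dots> \<le> Lf * L2_norm \<Omega> (\<lambda>x. w t x - u x) * N"
        using assumptionA_gradient_Lipschitz[OF A w_L2 u] L2_norm_nonneg[of \<Omega> d]
        by (simp add: N_def mult_right_mono)
      also have "\<dots> = Lf * t * N\<^sup>2"
        using t by (simp add: w_def L2_norm_mult N_def power2_eq_square)
      finally show ?thesis .
    qed
    ultimately show "\<exists>y. (\<phi> has_real_derivative y) (at t) \<and> y \<le> 0"
      by (intro exI conjI) auto
  qed simp
  moreover have "w 0 = u" "w 1 = v"
    by (auto simp: w_def d_def)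
  ultimately show ?thesis
    by (simp add: \<phi>_def I_def N_def d_def)
qed

lemma AE_tendsto_zero_if_summable_L2_norm:
  assumes d_L2: "\<And>k. d k \<in> L2 \<Omega>" and summable: "summable (\<lambda>k. (L2_norm \<Omega> (d k))\<^sup>2)"
  shows "AE x in lebesgue_on \<Omega>. (\<lambda>k. d k x) \<longlonglongrightarrow> 0"
proof -
  let ?M = "lebesgue_on \<Omega>"
  have [measurable]: "d k \<in> borel_measurable ?M" for k
    using d_L2 by (rule L2_measurable)
  have "(\<integral>\<^sup>+x. (\<Sum>k. ennreal ((d k x)\<^sup>2)) \<partial>?M) = (\<Sum>k. ennreal ((L2_norm \<Omega> (d k))\<^sup>2))"
    using L2_integrable_power2[OF d_L2]
    by (simp add: nn_integral_suminf nn_integral_eq_integral L2_norm_power2)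
  also have "\<dots> = ennreal (\<Sum>k. (L2_norm \<Omega> (d k))\<^sup>2)"
    by (rule suminf_ennreal2[OF _ summable]) simp
  finally have "AE x in ?M. (\<Sum>k. ennreal ((d k x)\<^sup>2)) \<noteq> \<infinity>"
    by (intro nn_integral_noteq_infinite) auto
  then show ?thesis
  proof (rule AE_mp, intro AE_I2 impI)
    fix x assume "(\<Sum>k. ennreal ((d k x)\<^sup>2)) \<noteq> \<infinity>"
    then have "summable (\<lambda>k. (d k x)\<^sup>2)"
      by (intro summable_suminf_not_top) auto
    then have "(\<lambda>k. sqrt ((d k x)\<^sup>2)) \<longlonglongrightarrow> sqrt 0"
      by (intro tendsto_real_sqrt summable_LIMSEQ_zero)
    then show "(\<lambda>k. d k x) \<longlonglongrightarrow> 0"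
      by (simp add: tendsto_rabs_zero_iff)
  qed
qed

lemma summable_if_bounded_below_decrease:
  fixes E N :: "nat \<Rightarrow> real"
  assumes c: "c > 0" and N_nonneg: "\<And>k. 0 \<le> N k" and bounded: "\<And>k. b \<le> E k"
    and decrease: "\<And>k. E (Suc k) + c * N k \<le> E k"
  shows "summable N"
proof (rule bounded_imp_summable)
  have telescope: "c * (\<Sum>k<n. N k) \<le> E 0 - E n" for n
  proof (induction n)
    case (Suc n)
    then show ?case using decrease[of n] by (simp add: algebra_simps)
  qed simp
  fix n
  have "c * (\<Sum>k\<le>n. N k) \<le> E 0 - b"
    using telescope[of "Suc n"] bounded[of "Suc n"] by (simp add: lessThan_Suc_atMost)
  then show "(\<Sum>k\<le>n. N k) \<le> (E 0 - b) / c"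
    using c by (simp add: field_simps)
qed (rule N_nonneg)

lemma G_int_nonneg: "0 \<le> G_int \<Omega> g u"
  by (simp add: G_int_def)

lemma G_int_zero: "g 0 = 0 \<Longrightarrow> G_int \<Omega> g (\<lambda>x. 0) = 0"
  by (simp add: G_int_def e2ennreal_neg zero_ennreal.rep_eq)

lemma prox_grad_iterates_L2: "prox_grad_iterates \<Omega> f Df g L us \<Longrightarrow> us k \<in> L2 \<Omega>"
  by (cases k) (auto simp: prox_grad_iterates_def)

lemma prox_grad_iterates_minimal:
  "prox_grad_iterates \<Omega> f Df g L us \<Longrightarrow> v \<in> L2 \<Omega> \<Longrightarrow>
     prox_objective \<Omega> f Df g L (us k) (us (Suc k)) \<le> prox_objective \<Omega> f Df g L (us k) v"
  by (simp add: prox_grad_iterates_def)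

text \<open>The competitor 0 has finite objective, hence so has every iterate after the first;
  the initial point may have infinite penalty.\<close>

lemma prox_grad_iterates_G_int_finite:
  assumes "g 0 = 0" and it: "prox_grad_iterates \<Omega> f Df g L us"
  shows "G_int \<Omega> g (us (Suc k)) = ereal (real_of_ereal (G_int \<Omega> g (us (Suc k))))"
proof -
  have "prox_objective \<Omega> f Df g L (us k) (us (Suc k)) \<le> prox_objective \<Omega> f Df g L (us k) (\<lambda>x. 0)"
    using prox_grad_iterates_minimal[OF it L2_zero] .
  moreover have "prox_objective \<Omega> f Df g L (us k) (\<lambda>x. 0) < \<infinity>"
    using G_int_zero[of g \<Omega>] \<open>g 0 = 0\<close> by (simp add: prox_objective_def)
  ultimately have "G_int \<Omega> g (us (Suc k)) \<noteq> \<infinity>"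
    by (auto simp: prox_objective_def)
  then show ?thesis
    using G_int_nonneg[of \<Omega> g "us (Suc k)"] by (simp add: ereal_real')
qed

lemma prox_grad_iterates_sufficient_decrease:
  assumes A: "assumptionA \<Omega> f Df Lf" and "g 0 = 0" and it: "prox_grad_iterates \<Omega> f Df g L us"
  defines "F \<equiv> \<lambda>u. f u + real_of_ereal (G_int \<Omega> g u)"
  shows "F (us (Suc (Suc k))) + (L - Lf) / 2 * (L2_norm \<Omega> (\<lambda>x. us (Suc (Suc k)) x - us (Suc k) x))\<^sup>2
           \<le> F (us (Suc k))"
proof -
  define u where "u = us (Suc k)"
  define v where "v = us (Suc (Suc k))"
  define I where "I = L2_inner \<Omega> (Df u) (\<lambda>x. v x - u x)"
  define N where "N = (L2_norm \<Omega> (\<lambda>x. v x - u x))\<^sup>2"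
  have u: "u \<in> L2 \<Omega>" and v: "v \<in> L2 \<Omega>"
    unfolding u_def v_def using prox_grad_iterates_L2[OF it] by auto
  have "prox_objective \<Omega> f Df g L u v \<le> prox_objective \<Omega> f Df g L u u"
    unfolding u_def v_def using prox_grad_iterates_minimal[OF it prox_grad_iterates_L2[OF it]] .
  then have "ereal (f u + I + L / 2 * N) + G_int \<Omega> g v \<le> ereal (f u) + G_int \<Omega> g u"
    by (simp add: prox_objective_def I_def N_def L2_inner_def L2_norm_def)
  then have "f u + I + L / 2 * N + real_of_ereal (G_int \<Omega> g v) \<le> F u"
    unfolding F_def u_def v_def
    by (subst (asm) (1 2) prox_grad_iterates_G_int_finite[OF \<open>g 0 = 0\<close> it]) simp
  moreover have "f v \<le> f u + I + Lf / 2 * N"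
    unfolding I_def N_def by (rule assumptionA_descent[OF A u v])
  ultimately show ?thesis
    unfolding F_def u_def v_def N_def by (simp add: field_simps)
qed

theorem corollary4p5:
  fixes \<Omega> :: "'a::euclidean_space set"
    and f :: "('a \<Rightarrow> real) \<Rightarrow> real" and Df :: "('a \<Rightarrow> real) \<Rightarrow> ('a \<Rightarrow> real)"
    and g :: "real \<Rightarrow> ereal" and Lf L :: real and us :: "nat \<Rightarrow> 'a \<Rightarrow> real"
  assumes "\<Omega> \<in> sets lebesgue" and "emeasure lebesgue \<Omega> < \<infinity>"
    and "assumptionA \<Omega> f Df Lf"
    and "assumptionB g"
    and "L > Lf"
    and "prox_grad_iterates \<Omega> f Df g L us"
  shows "AE x in lebesgue. x \<in> \<Omega> \<longrightarrow> (\<lambda>k. us (Suc k) x - us k x) \<longlonglongrightarrow> 0"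
proof -
  note A = assms(3) and iterates = assms(6)
  have g0: "g 0 = 0"
    using assms(4)[unfolded assumptionB_def, THEN conjunct2, THEN conjunct2, THEN conjunct1] .
  obtain f_min where f_min: "\<And>u. u \<in> L2 \<Omega> \<Longrightarrow> f_min \<le> f u"
    using assumptionA_bounded_below[OF A] by blast
  define F where "F u = f u + real_of_ereal (G_int \<Omega> g u)" for u
  define d where "d k = (\<lambda>x. us (Suc k) x - us k x)" for k
  have "summable (\<lambda>k. (L2_norm \<Omega> (d (Suc k)))\<^sup>2)"
  proof (rule summable_if_bounded_below_decrease[where E = "\<lambda>k. F (us (Suc k))" and b = f_min])
    show "0 < (L - Lf) / 2"
      using assms(5) by simp
    show "f_min \<le> F (us (Suc k))" for k
      using f_min[OF prox_grad_iterates_L2[OF iterates], of "Suc k"]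
        real_of_ereal_pos[OF G_int_nonneg, of \<Omega> g "us (Suc k)"]
      by (simp add: F_def)
    show "F (us (Suc (Suc k))) + (L - Lf) / 2 * (L2_norm \<Omega> (d (Suc k)))\<^sup>2 \<le> F (us (Suc k))" for k
      using prox_grad_iterates_sufficient_decrease[OF A g0 iterates] by (simp add: F_def d_def)
  qed simp
  then have "summable (\<lambda>k. (L2_norm \<Omega> (d k))\<^sup>2)"
    by (subst (asm) summable_Suc_iff)
  then have "AE x in lebesgue_on \<Omega>. (\<lambda>k. d k x) \<longlonglongrightarrow> 0"
    by (intro AE_tendsto_zero_if_summable_L2_norm)
      (simp_all add: d_def L2_diff prox_grad_iterates_L2[OF iterates])
  then show ?thesis
    using assms(1) by (subst (asm) AE_restrict_space_iff) (auto simp: d_def)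
qed

end
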